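(* Fix a natural number $m\ge1$ and reals $a<b$, and let $S=T\cap[a,b]$. Consider the problem ($SDP_0$): minimize $y$ over real numbers $y,x_1,\ldots,x_{2m-1}$ subject to $$y+\sum_{i=1}^k p_{ki}x_i\ \ge\ -p_{k0},\qquad k=1,\ldots,2m-1,$$ and $H_m(1,x_1,\ldots,x_{2m-1},[a,b])\succeq 0$. Let $y^*$ be the optimal (infimal) value and suppose $y^*>0$. Then $$A(\mathbf M,S)\le \frac{1+y^*}{y^*}.$$
   Context: $\mathbf M$ is a 2-point-homogeneous space with its associated real function $\tau(x,y)$ (a function of the distance), $\tau_0:=\tau(x,x)$ (independent of $x$), and $T=\{\tau(x,y):x,y\in\mathbf M\}$. Its zonal spherical functions $\Phi_k$ ($k=0,1,2,\ldots$) are assumed to be real polynomials of degree $k$, written $\Phi_k(t)=\sum_{d=0}^k p_{kd}t^d$, normalized by $\Phi_k(\tau_0)=1$, with the property that for every $k\ge0$ and every finite set $\{x_1,\ldots,x_N\}\subset\mathbf M$ the matrix $(\Phi_k(\tau(x_i,x_j)))_{i,j}$ is positive semidefinite. For $S\subseteq T$, an $S$-code is a finite set $C\subset\mathbf M$ with $\tau(x,y)\in S$ for all distinct $x,y\in C$; $A(\mathbf M,S)$ is the largest cardinality of an $S$-code. For reals $s_0,\ldots,s_{2m-1}$ and $a<b$: $R_m=(s_{i+j-2})_{i,j=1}^m$, $F_m^+(a)=(s_{i+j-1}-a s_{i+j-2})_{i,j=1}^m$, $F_m^-(b)=(b s_{i+j-2}-s_{i+j-1})_{i,j=1}^m$,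 and $H_m(s_0,\ldots,s_{2m-1},[a,b])=\operatorname{diag}(R_m,F_m^+(a),F_m^-(b))$. *)

theory Defs
  imports Complex_Main
begin

text \<open>Square matrices of size n are represented as functions nat => nat => real,
  only the entries with indices < n being relevant (indices start at 0).\<close>

definition psd :: "nat \<Rightarrow> (nat \<Rightarrow> nat \<Rightarrow> real) \<Rightarrow> bool" where
  "psd n A \<longleftrightarrow> (\<forall>i<n. \<forall>j<n. A i j = A j i) \<and>
     (\<forall>v::nat \<Rightarrow> real. 0 \<le> (\<Sum>i<n. \<Sum>j<n. v i * A i j * v j))"

definition Phi :: "(nat \<Rightarrow> nat \<Rightarrow> real) \<Rightarrow> nat \<Rightarrow> real \<Rightarrow> real" where
  "Phi p k t = (\<Sum>d\<le>k. p k d * t ^ d)"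

definition R_mat :: "(nat \<Rightarrow> real) \<Rightarrow> nat \<Rightarrow> nat \<Rightarrow> real" where
  "R_mat s i j = s (i + j)"

definition Fplus_mat :: "(nat \<Rightarrow> real) \<Rightarrow> real \<Rightarrow> nat \<Rightarrow> nat \<Rightarrow> real" where
  "Fplus_mat s a i j = s (i + j + 1) - a * s (i + j)"

definition Fminus_mat :: "(nat \<Rightarrow> real) \<Rightarrow> real \<Rightarrow> nat \<Rightarrow> nat \<Rightarrow> real" where
  "Fminus_mat s b i j = b * s (i + j) - s (i + j + 1)"

definition H_mat :: "nat \<Rightarrow> (nat \<Rightarrow> real) \<Rightarrow> real \<Rightarrow> real \<Rightarrow> nat \<Rightarrow> nat \<Rightarrow> real" where
  "H_mat m s a b i j =
     (if i < m \<and> j < m then R_mat s i j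
      else if m \<le> i \<and> i < 2*m \<and> m \<le> j \<and> j < 2*m then Fplus_mat s a (i - m) (j - m)
      else if 2*m \<le> i \<and> i < 3*m \<and> 2*m \<le> j \<and> j < 3*m then Fminus_mat s b (i - 2*m) (j - 2*m)
      else 0)"

definition Tset :: "('a \<Rightarrow> 'a \<Rightarrow> real) \<Rightarrow> real set" where
  "Tset \<tau> = {\<tau> x y | x y. True}"

definition is_code :: "('a \<Rightarrow> 'a \<Rightarrow> real) \<Rightarrow> real set \<Rightarrow> 'a set \<Rightarrow> bool" where
  "is_code \<tau> S C \<longleftrightarrow> finite C \<and> (\<forall>x\<in>C. \<forall>y\<in>C. x \<noteq> y \<longrightarrow> \<tau> x y \<in> S)"

definition SDP0_feasible :: "(nat \<Rightarrow> nat \<Rightarrow> real) \<Rightarrow> nat \<Rightarrow> real \<Rightarrow> real \<Rightarrow> real set" where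
  "SDP0_feasible p m a b = {y. \<exists>x :: nat \<Rightarrow> real.
      (\<forall>k\<in>{1..2*m-1}. y + (\<Sum>i=1..k. p k i * x i) \<ge> - p k 0) \<and>
      psd (3*m) (H_mat m (\<lambda>i. if i = 0 then 1 else x i) a b)}"

end

theory Submission
  imports Defs
begin

text \<open>For an \<open>S\<close>-code \<open>C\<close> with \<open>N \<ge> 2\<close> points let \<open>x_d\<close> be the average of \<open>\<tau>\<^sup>d\<close> over the
  ordered pairs of distinct points of \<open>C\<close>.  These are the moments of a nonnegative measure on
  \<open>[a, b]\<close>, so \<open>H_m(1, x_1, \<dots>, x_{2m-1}, [a, b])\<close> is positive semidefinite; and positive
  definiteness of \<open>\<Phi>_k\<close>, tested against the all-ones vector, gives
  \<open>N + N (N - 1) \<Sigma>_d p_{kd} x_d \<ge> 0\<close>.  Hence \<open>y = 1 / (N - 1)\<close> is feasible for \<open>SDP_0\<close>,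
  i.e. \<open>y\<^sup>* \<le> 1 / (N - 1)\<close>, which rearranges to the bound.\<close>

lemma psd_cong:
  "(\<And>i j. i < n \<Longrightarrow> j < n \<Longrightarrow> A i j = B i j) \<Longrightarrow> psd n A = psd n B"
  unfolding psd_def by (auto intro!: sum.cong)

lemma psd_outer: "psd n (\<lambda>i j. g i * g j)"
proof -
  have "(\<Sum>i<n. \<Sum>j<n. v i * (g i * g j) * v j) = (\<Sum>i<n. v i * g i)\<^sup>2" for v :: "nat \<Rightarrow> real"
    by (simp add: power2_eq_square sum_product algebra_simps)
  then show ?thesis
    unfolding psd_def by simp
qed

lemma psd_add: "psd n A \<Longrightarrow> psd n B \<Longrightarrow> psd n (\<lambda>i j. A i j + B i j)"
  unfolding psd_def by (auto simp: algebra_simps sum.distrib)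

lemma psd_scale:
  assumes "psd n A" and "0 \<le> c"
  shows "psd n (\<lambda>i j. c * A i j)"
proof -
  have "(\<Sum>i<n. \<Sum>j<n. v i * (c * A i j) * v j) = c * (\<Sum>i<n. \<Sum>j<n. v i * A i j * v j)" for v
    by (simp add: sum_distrib_left algebra_simps)
  with assms show ?thesis
    unfolding psd_def by simp
qed

lemma psd_sum:
  "finite Q \<Longrightarrow> (\<And>q. q \<in> Q \<Longrightarrow> psd n (A q)) \<Longrightarrow> psd n (\<lambda>i j. \<Sum>q\<in>Q. A q i j)"
proof (induction Q rule: finite_induct)
  case empty
  then show ?case by (simp add: psd_def)
next
  case (insert q Q)
  then show ?case using psd_add[of n "A q"] by simp
qed

definition embed_block :: "nat \<Rightarrow> nat \<Rightarrow> (nat \<Rightarrow> nat \<Rightarrow> real) \<Rightarrow> nat \<Rightarrow> nat \<Rightarrow> real" where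
  "embed_block l n A i j = (if l \<le> i \<and> i < l + n \<and> l \<le> j \<and> j < l + n then A (i - l) (j - l) else 0)"

lemma psd_embed_block:
  assumes A: "psd n A" and le: "l + n \<le> N"
  shows "psd N (embed_block l n A)"
proof -
  have "(\<Sum>i<N. \<Sum>j<N. v i * embed_block l n A i j * v j) = (\<Sum>i<n. \<Sum>j<n. v (i + l) * A i j * v (j + l))"
    for v :: "nat \<Rightarrow> real"
  proof -
    have "(\<Sum>i<N. \<Sum>j<N. v i * embed_block l n A i j * v j) =
        (\<Sum>i\<in>{l..<l + n}. \<Sum>j\<in>{l..<l + n}. v i * A (i - l) (j - l) * v j)"
      using le unfolding embed_block_def
      by (intro sum.mono_neutral_cong_right) (auto intro!: sum.mono_neutral_cong_right)
    also have "\<dots> = (\<Sum>i<n. \<Sum>j<n. v (i + l) * A i j * v (j + l))"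
      unfolding add.commute[of l n] sum.shift_bounds_nat_ivl[where m=0, simplified]
      by (simp add: lessThan_atLeast0)
    finally show ?thesis .
  qed
  with A show ?thesis
    unfolding psd_def by (auto simp: embed_block_def)
qed

lemma H_mat_eq_blocks:
  assumes "i < 3 * m" and "j < 3 * m"
  shows "H_mat m s a b i j = embed_block 0 m (R_mat s) i j + embed_block m m (Fplus_mat s a) i j
    + embed_block (2 * m) m (Fminus_mat s b) i j"
  using assms unfolding H_mat_def embed_block_def by (simp add: mult_2)

lemma psd_H_matI:
  assumes "psd m (R_mat s)" and "psd m (Fplus_mat s a)" and "psd m (Fminus_mat s b)"
  shows "psd (3 * m) (H_mat m s a b)"
proof -
  have "psd (3 * m) (H_mat m s a b) = psd (3 * m) (\<lambda>i j. embed_block 0 m (R_mat s) i j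
      + embed_block m m (Fplus_mat s a) i j + embed_block (2 * m) m (Fminus_mat s b) i j)"
    by (rule psd_cong) (rule H_mat_eq_blocks)
  also have "\<dots>"
    using assms by (intro psd_add psd_embed_block) auto
  finally show ?thesis .
qed

lemma psd_moment_Hankel:
  assumes "finite Q" and "\<And>q. q \<in> Q \<Longrightarrow> 0 \<le> c q"
  shows "psd n (\<lambda>i j. \<Sum>q\<in>Q. c q * t q ^ (i + j))"
  using psd_sum[OF assms(1), of n "\<lambda>q i j. c q * (t q ^ i * t q ^ j)"]
  by (simp add: assms(2) psd_scale psd_outer power_add)

lemma psd_H_mat_moments:
  assumes "finite Q" and "\<And>q. q \<in> Q \<Longrightarrow> 0 \<le> c q" and "\<And>q. q \<in> Q \<Longrightarrow> t q \<in> {a..b}"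
  shows "psd (3 * m) (H_mat m (\<lambda>d. \<Sum>q\<in>Q. c q * t q ^ d) a b)"
proof (rule psd_H_matI)
  show "psd m (R_mat (\<lambda>d. \<Sum>q\<in>Q. c q * t q ^ d))"
    unfolding R_mat_def using assms(1,2) by (rule psd_moment_Hankel)
  have "Fplus_mat (\<lambda>d. \<Sum>q\<in>Q. c q * t q ^ d) a = (\<lambda>i j. \<Sum>q\<in>Q. (c q * (t q - a)) * t q ^ (i + j))"
    by (simp add: Fplus_mat_def fun_eq_iff sum_distrib_left sum_subtractf[symmetric] algebra_simps)
  then show "psd m (Fplus_mat (\<lambda>d. \<Sum>q\<in>Q. c q * t q ^ d) a)"
    using assms by (simp add: psd_moment_Hankel)
  have "Fminus_mat (\<lambda>d. \<Sum>q\<in>Q. c q * t q ^ d) b = (\<lambda>i j. \<Sum>q\<in>Q. (c q * (b - t q)) * t q ^ (i + j))"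
    by (simp add: Fminus_mat_def fun_eq_iff sum_distrib_left sum_subtractf[symmetric] algebra_simps)
  then show "psd m (Fminus_mat (\<lambda>d. \<Sum>q\<in>Q. c q * t q ^ d) b)"
    using assms by (simp add: psd_moment_Hankel)
qed

lemma psd_kernel_sum_nonneg:
  fixes f :: "'a \<Rightarrow> 'a \<Rightarrow> real"
  assumes "\<And>N xs. inj_on xs {..<N} \<Longrightarrow> psd N (\<lambda>i j. f (xs i) (xs j))" and "finite C"
  shows "0 \<le> (\<Sum>x\<in>C. \<Sum>y\<in>C. f x y)"
proof -
  obtain xs where xs: "bij_betw xs {..<card C} C"
    using ex_bij_betw_nat_finite[OF \<open>finite C\<close>] by (auto simp: lessThan_atLeast0)
  have "0 \<le> (\<Sum>i<card C. \<Sum>j<card C. 1 * f (xs i) (xs j) * 1)"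
    using assms(1)[OF bij_betw_imp_inj_on[OF xs]] unfolding psd_def by (blast dest: spec[of _ "\<lambda>_. 1"])
  also have "\<dots> = (\<Sum>i<card C. \<Sum>y\<in>C. f (xs i) y)"
    by (simp add: sum.reindex_bij_betw[OF xs])
  also have "\<dots> = (\<Sum>x\<in>C. \<Sum>y\<in>C. f x y)"
    by (rule sum.reindex_bij_betw[OF xs])
  finally show ?thesis .
qed

lemma sum_square_diag_offdiag:
  assumes "finite C"
  shows "(\<Sum>x\<in>C. \<Sum>y\<in>C. g x y) = (\<Sum>x\<in>C. g x x) + (\<Sum>(x, y)\<in>C \<times> C - Id. g x y)"
proof -
  have diag: "C \<times> C \<inter> Id = (\<lambda>x. (x, x)) ` C"
    by auto
  have "(\<Sum>x\<in>C. \<Sum>y\<in>C. g x y) = (\<Sum>(x, y)\<in>C \<times> C \<inter> Id. g x y) + (\<Sum>(x, y)\<in>C \<times> C - Id. g x y)"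
    using assms by (simp add: sum.cartesian_product sum.Int_Diff)
  also have "(\<Sum>(x, y)\<in>C \<times> C \<inter> Id. g x y) = (\<Sum>x\<in>C. g x x)"
    unfolding diag by (simp add: sum.reindex inj_on_def)
  finally show ?thesis .
qed

lemma card_offdiag:
  "finite C \<Longrightarrow> real (card (C \<times> C - Id)) = real (card C) * (real (card C) - 1)"
  using sum_square_diag_offdiag[of C "\<lambda>_ _. 1 :: real"] by (simp add: algebra_simps)

text \<open>The point \<open>x_d\<close> of \<open>SDP_0\<close> attached to a code; for \<open>card C \<le> 1\<close> the division makes it \<open>0\<close>.\<close>

definition code_moment :: "('a \<Rightarrow> 'a \<Rightarrow> real) \<Rightarrow> 'a set \<Rightarrow> nat \<Rightarrow> real" where
  "code_moment \<tau> C d = (\<Sum>(x, y)\<in>C \<times> C - Id. \<tau> x y ^ d) / (real (card C) * (real (card C) - 1))"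

lemma code_moment_0: "finite C \<Longrightarrow> 2 \<le> card C \<Longrightarrow> code_moment \<tau> C 0 = 1"
  by (cases "C = {}") (simp_all add: code_moment_def case_prod_unfold card_offdiag)

lemma psd_H_mat_code_moment:
  assumes "is_code \<tau> {a..b} C"
  shows "psd (3 * m) (H_mat m (code_moment \<tau> C) a b)"
proof -
  define w where "w = 1 / (real (card C) * (real (card C) - 1))"
  have "0 \<le> w"
    by (cases "card C") (auto simp: w_def)
  then have "psd (3 * m) (H_mat m (\<lambda>d. \<Sum>q\<in>C \<times> C - Id. w * case_prod \<tau> q ^ d) a b)"
    by (intro psd_H_mat_moments) (use assms in \<open>auto simp: is_code_def\<close>)
  moreover have "code_moment \<tau> C = (\<lambda>d. \<Sum>q\<in>C \<times> C - Id. w * case_prod \<tau> q ^ d)"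
    by (simp add: fun_eq_iff code_moment_def w_def sum_divide_distrib case_prod_unfold)
  ultimately show ?thesis
    by simp
qed

lemma code_moment_Phi_lower_bound:
  assumes "finite C" and "2 \<le> card C" and "\<And>x. x \<in> C \<Longrightarrow> \<tau> x x = \<tau>0" and "Phi p k \<tau>0 = 1"
    and "0 \<le> (\<Sum>x\<in>C. \<Sum>y\<in>C. Phi p k (\<tau> x y))"
  shows "- 1 / (real (card C) - 1) \<le> (\<Sum>d\<le>k. p k d * code_moment \<tau> C d)"
proof -
  define N where "N = real (card C)"
  define S where "S = (\<Sum>d\<le>k. p k d * code_moment \<tau> C d)"
  have N: "2 \<le> N"
    using assms(2) by (simp add: N_def)
  have "(\<Sum>(x, y)\<in>C \<times> C - Id. Phi p k (\<tau> x y)) = (\<Sum>d\<le>k. p k d * (\<Sum>(x, y)\<in>C \<times> C - Id. \<tau> x y ^ d))"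
    unfolding Phi_def case_prod_unfold sum_distrib_left by (rule sum.swap)
  also have "\<dots> = N * (N - 1) * S"
  proof -
    have "(\<Sum>(x, y)\<in>C \<times> C - Id. \<tau> x y ^ d) = N * (N - 1) * code_moment \<tau> C d" for d
      using N by (simp add: code_moment_def N_def)
    then show ?thesis
      by (simp add: S_def sum_distrib_left mult_ac)
  qed
  moreover have "(\<Sum>x\<in>C. Phi p k (\<tau> x x)) = N"
    using assms(3,4) by (simp add: N_def)
  ultimately have "0 \<le> N * (1 + (N - 1) * S)"
    using assms(5) sum_square_diag_offdiag[OF assms(1), of "\<lambda>x y. Phi p k (\<tau> x y)"]
    by (simp add: algebra_simps)
  then have "0 \<le> 1 + (N - 1) * S"
    using N by (simp add: zero_le_mult_iff)
  with N show ?thesis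
    unfolding S_def[symmetric] N_def[symmetric] by (simp add: field_simps)
qed

lemma SDP0_feasible_code:
  assumes diag: "\<And>x. \<tau> x x = \<tau>0" and Phi_tau0: "\<And>k. Phi p k \<tau>0 = 1"
    and pos_def: "\<And>k N (xs :: nat \<Rightarrow> 'a). inj_on xs {..<N} \<Longrightarrow>
                    psd N (\<lambda>i j. Phi p k (\<tau> (xs i) (xs j)))"
    and code: "is_code \<tau> {a..b} C" and card: "2 \<le> card C"
  shows "1 / (real (card C) - 1) \<in> SDP0_feasible p m a b"
  unfolding SDP0_feasible_def
proof (intro CollectI exI[of _ "code_moment \<tau> C"] conjI ballI)
  have fin: "finite C"
    using code by (simp add: is_code_def)
  have "(\<lambda>i. if i = 0 then 1 else code_moment \<tau> C i) = code_moment \<tau> C"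
    using code_moment_0[OF fin card] by auto
  then show "psd (3 * m) (H_mat m (\<lambda>i. if i = 0 then 1 else code_moment \<tau> C i) a b)"
    using psd_H_mat_code_moment[OF code] by simp
  fix k
  have "0 \<le> (\<Sum>x\<in>C. \<Sum>y\<in>C. Phi p k (\<tau> x y))"
    using psd_kernel_sum_nonneg[of "\<lambda>x y. Phi p k (\<tau> x y)", OF pos_def fin] .
  with fin card diag Phi_tau0
  have "- 1 / (real (card C) - 1) \<le> (\<Sum>d\<le>k. p k d * code_moment \<tau> C d)"
    by (rule code_moment_Phi_lower_bound)
  moreover have "(\<Sum>d\<le>k. p k d * code_moment \<tau> C d) = p k 0 + (\<Sum>d = 1..k. p k d * code_moment \<tau> C d)"
    by (simp add: sum.atMost_shift sum.atLeast1_atMost_eq code_moment_0[OF fin card])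
  ultimately show "- p k 0 \<le> 1 / (real (card C) - 1) + (\<Sum>i = 1..k. p k i * code_moment \<tau> C i)"
    unfolding minus_divide_left[symmetric] by linarith
qed

theorem theorem4p1:
  fixes \<tau> :: "'a \<Rightarrow> 'a \<Rightarrow> real" and \<tau>0 :: real
    and p :: "nat \<Rightarrow> nat \<Rightarrow> real"
    and m :: nat and a b ystar :: real
  assumes tau_sym: "\<And>x y. \<tau> x y = \<tau> y x"
    and tau_diag: "\<And>x. \<tau> x x = \<tau>0"
    and deg: "\<And>k. p k k \<noteq> 0"
    and norm: "\<And>k. Phi p k \<tau>0 = 1"
    and pos_def: "\<And>k N (xs :: nat \<Rightarrow> 'a). inj_on xs {..<N} \<Longrightarrow>
                    psd N (\<lambda>i j. Phi p k (\<tau> (xs i) (xs j)))"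
    and m_pos: "1 \<le> m"
    and ab: "a < b"
    and bdd: "bdd_below (SDP0_feasible p m a b)"
    and ystar_def: "ystar = Inf (SDP0_feasible p m a b)"
    and ystar_pos: "ystar > 0"
  shows "\<forall>C. is_code \<tau> (Tset \<tau> \<inter> {a..b}) C \<longrightarrow> real (card C) \<le> (1 + ystar) / ystar"
proof (intro allI impI)
  fix C
  assume "is_code \<tau> (Tset \<tau> \<inter> {a..b}) C"
  then have code: "is_code \<tau> {a..b} C"
    by (auto simp: is_code_def)
  show "real (card C) \<le> (1 + ystar) / ystar"
  proof (cases "card C \<le> 1")
    case True
    then have "real (card C) \<le> 1"
      by simp
    moreover have "1 \<le> (1 + ystar) / ystar"
      using ystar_pos by (simp add: field_simps)
    ultimately show ?thesis
      by linarith
  next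
    case False
    then have "ystar \<le> 1 / (real (card C) - 1)"
      unfolding ystar_def using SDP0_feasible_code[OF tau_diag norm pos_def code] bdd
      by (intro cInf_lower) auto
    with False ystar_pos show ?thesis
      by (simp add: field_simps)
  qed
qed

end
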